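(* Let $E$ be a Hilbert C*-module over a unital C*-algebra $\mathcal{A}$ that satisfies property $[\mathbb{H}]$, let $C\in\mathcal{K}(E)$ and $L=I-C$. Then there exists a uniquely determined non-negative integer $r$ such that $$\{0\}=\mathrm{Ker}(L^0)\subsetneq \mathrm{Ker}(L^1)\subsetneq\cdots\subsetneq \mathrm{Ker}(L^r)=\mathrm{Ker}(L^{r+1})=\cdots$$ and $$E=\mathrm{Ran}(L^0)\supsetneq \mathrm{Ran}(L^1)\supsetneq\cdots\supsetneq \mathrm{Ran}(L^r)=\mathrm{Ran}(L^{r+1})=\cdots;$$ that is, the smallest $m$ with $\mathrm{Ker}(L^m)=\mathrm{Ker}(L^{m+1})$ exists, the smallest $m$ with $\mathrm{Ran}(L^m)=\mathrm{Ran}(L^{m+1})$ exists, both are equal to $r$, and $\mathrm{Ker}(L^n)=\mathrm{Ker}(L^r)$, $\mathrm{Ran}(L^n)=\mathrm{Ran}(L^r)$ for all $n\ge r$.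
   Context: A (right) Hilbert $\mathcal{A}$-module $E$ is a right $\mathcal{A}$-module with an $\mathcal{A}$-valued inner product $\langle\cdot,\cdot\rangle$ (linear in the second variable, $\langle x,ya\rangle=\langle x,y\rangle a$, $\langle y,x\rangle=\langle x,y\rangle^*$, $\langle x,x\rangle\ge 0$ with equality iff $x=0$), complete in the norm $\|x\|=\|\langle x,x\rangle\|^{1/2}$. For $x,y\in E$, $\theta_{x,y}(z)=x\langle y,z\rangle$; $\mathcal{K}(E)$ (the compact operators) is the norm closure in the C*-algebra $\mathcal{L}(E)$ of adjointable operators of the linear span of $\{\theta_{x,y}:x,y\in E\}$. $E$ satisfies property $[\mathbb{H}]$ if for every bounded sequence $(\zeta_n)$ in $E$ there exist a subsequence $(\zeta_{n_k})$ and $\zeta\in E$ such that $\langle v,\zeta_{n_k}\rangle\to\langle v,\zeta\rangle$ for every $v\in E$. $L^0=I$. *)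

theory Defs
  imports Complex_Main
begin

(* A unital C*-algebra is modelled on a type 'a of class real Banach algebra with unit,
   together with an element j (the imaginary unit, central, j*j = -1, giving the complex
   structure with ||(x+iy)a|| = |x+iy| ||a||) and an involution st. *)

definition scC :: "'a::real_normed_algebra_1 \<Rightarrow> complex \<Rightarrow> 'a \<Rightarrow> 'a" where
  "scC j c a = Re c *\<^sub>R a + Im c *\<^sub>R (j * a)"

definition unital_cstar_algebra ::
  "('a::{real_normed_algebra_1,banach} \<Rightarrow> 'a) \<Rightarrow> 'a \<Rightarrow> bool" where
  "unital_cstar_algebra st j \<longleftrightarrow>
     (\<forall>a. j * a = a * j) \<and> j * j = -1 \<and>
     (\<forall>c a. norm (scC j c a) = cmod c * norm a) \<and>
     (\<forall>a b. st (a + b) = st a + st b) \<and>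
     (\<forall>c a. st (scC j c a) = scC j (cnj c) (st a)) \<and>
     (\<forall>a b. st (a * b) = st b * st a) \<and>
     (\<forall>a. st (st a) = a) \<and>
     (\<forall>a. norm (st a * a) = (norm a)\<^sup>2)"

definition cstar_pos :: "('a::{real_normed_algebra_1,banach} \<Rightarrow> 'a) \<Rightarrow> 'a \<Rightarrow> bool" where
  "cstar_pos st a \<longleftrightarrow> (\<exists>b. a = st b * b)"

definition hilbert_module ::
  "('a::{real_normed_algebra_1,banach} \<Rightarrow> 'a) \<Rightarrow> 'a \<Rightarrow>
   ('e::banach \<Rightarrow> 'a \<Rightarrow> 'e) \<Rightarrow> ('e \<Rightarrow> 'e \<Rightarrow> 'a) \<Rightarrow> bool" where
  "hilbert_module st j act ip \<longleftrightarrow>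
     unital_cstar_algebra st j \<and>
     (\<forall>x a b. act x (a + b) = act x a + act x b) \<and>
     (\<forall>x y a. act (x + y) a = act x a + act y a) \<and>
     (\<forall>x a b. act x (a * b) = act (act x a) b) \<and>
     (\<forall>x (r::real). r *\<^sub>R x = act x (of_real r)) \<and>
     (\<forall>x y z. ip x (y + z) = ip x y + ip x z) \<and>
     (\<forall>x y a. ip x (act y a) = ip x y * a) \<and>
     (\<forall>x y. ip y x = st (ip x y)) \<and>
     (\<forall>x. cstar_pos st (ip x x)) \<and>
     (\<forall>x. ip x x = 0 \<longrightarrow> x = 0) \<and>
     (\<forall>x. norm x = sqrt (norm (ip x x)))"

definition theta :: "('e \<Rightarrow> 'a \<Rightarrow> 'e) \<Rightarrow> ('e \<Rightarrow> 'e \<Rightarrow> 'a) \<Rightarrow> 'e \<Rightarrow> 'e \<Rightarrow> 'e \<Rightarrow> 'e" where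
  "theta act ip x y z = act x (ip y z)"

definition adjointable :: "('e \<Rightarrow> 'e \<Rightarrow> 'a) \<Rightarrow> ('e \<Rightarrow> 'e) \<Rightarrow> bool" where
  "adjointable ip T \<longleftrightarrow> (\<exists>S. \<forall>x y. ip (T x) y = ip x (S y))"

(* K(E): operator-norm closure (inside L(E)) of the linear span of the theta_{x,y}.
   An element of the span is sum_{i<n} c_i theta_{x_i,y_i}, complex scalars acting on E
   via z \<mapsto> z (c 1). *)
definition compact_op ::
  "'a \<Rightarrow> ('e::real_normed_vector \<Rightarrow> 'a::{real_normed_algebra_1,banach} \<Rightarrow> 'e) \<Rightarrow>
   ('e \<Rightarrow> 'e \<Rightarrow> 'a) \<Rightarrow> ('e \<Rightarrow> 'e) \<Rightarrow> bool" where
  "compact_op j act ip C \<longleftrightarrow> adjointable ip C \<and>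
     (\<forall>\<epsilon>>0. \<exists>n (c::nat \<Rightarrow> complex) (xs::nat \<Rightarrow> 'e) ys.
        \<forall>z. norm (C z - (\<Sum>i<n. act (theta act ip (xs i) (ys i) z) (scC j (c i) 1))) \<le> \<epsilon> * norm z)"

definition property_H :: "('e::real_normed_vector \<Rightarrow> 'e \<Rightarrow> 'a::real_normed_vector) \<Rightarrow> bool" where
  "property_H ip \<longleftrightarrow>
     (\<forall>\<zeta>::nat \<Rightarrow> 'e. (\<exists>B. \<forall>n. norm (\<zeta> n) \<le> B) \<longrightarrow>
        (\<exists>h \<zeta>0. strict_mono h \<and> (\<forall>v. (\<lambda>k. ip v (\<zeta> (h k))) \<longlonglongrightarrow> ip v \<zeta>0)))"

definition Ker :: "('e \<Rightarrow> 'e::zero) \<Rightarrow> 'e set" where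
  "Ker T = {x. T x = 0}"

definition Ran :: "('e \<Rightarrow> 'e) \<Rightarrow> 'e set" where
  "Ran T = range T"

end

theory Submission
  imports Defs "HOL-Analysis.Elementary_Normed_Spaces"
begin

(* Property [H] makes C sequentially compact: a bounded sequence has a
   subsequence along which every <v, zeta_n> converges, so every finite-rank operator, and
   hence their norm limit C, maps it to a Cauchy sequence. The classical Riesz theory then
   applies. I - C maps closed subspaces to closed subspaces, so all Ran (L^n) are closed.
   A strictly monotone chain of closed subspaces along which L moves one step would, by
   Riesz's lemma, yield unit vectors whose C-images are pairwise 1/2 apart; hence both the
   kernel chain and the range chain of the powers of L stabilise. For any linear map with
   finite ascent and descent the two indices coincide. *)

section \<open>Ascent and descent of a linear map\<close>

definition ascent :: "('a \<Rightarrow> 'a::zero) \<Rightarrow> nat" where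
  "ascent L = (LEAST m. Ker (L ^^ m) = Ker (L ^^ Suc m))"

definition descent :: "('a \<Rightarrow> 'a) \<Rightarrow> nat" where
  "descent L = (LEAST m. Ran (L ^^ Suc m) = Ran (L ^^ m))"

lemma linear_funpow:
  fixes L :: "'a::real_vector \<Rightarrow> 'a"
  shows "linear L \<Longrightarrow> linear (L ^^ n)"
  by (induction n) (simp_all add: linear_id linear_compose)

lemma bounded_linear_funpow:
  fixes L :: "'a::real_normed_vector \<Rightarrow> 'a"
  shows "bounded_linear L \<Longrightarrow> bounded_linear (L ^^ n)"
  by (induction n) (simp_all add: id_def o_def bounded_linear_ident bounded_linear_compose)

lemma subspace_Ker: "linear T \<Longrightarrow> subspace (Ker T)"
  unfolding Ker_def by (rule linear_subspace_kernel)

lemma subspace_Ran: "linear T \<Longrightarrow> subspace (Ran T)"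
  unfolding Ran_def by (rule linear_subspace_image[OF _ subspace_UNIV])

lemma closed_Ker: "bounded_linear T \<Longrightarrow> closed (Ker T)"
  unfolding Ker_def by (intro closed_Collect_eq continuous_intros) (auto intro: linear_continuous_on)

lemma Ker_funpow_mono:
  fixes L :: "'a::real_vector \<Rightarrow> 'a"
  assumes "linear L" and "m \<le> n"
  shows "Ker (L ^^ m) \<subseteq> Ker (L ^^ n)"
proof -
  obtain d where "n = d + m" using \<open>m \<le> n\<close> le_iff_add add.commute by metis
  then show ?thesis
    by (auto simp: Ker_def funpow_add linear_0[OF linear_funpow[OF \<open>linear L\<close>]])
qed

lemma Ran_funpow_antimono: "m \<le> n \<Longrightarrow> Ran (L ^^ n) \<subseteq> Ran (L ^^ m)"
  by (auto simp: Ran_def le_iff_add funpow_add)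

lemma Ran_funpow_Suc: "Ran (L ^^ Suc n) = L ` Ran (L ^^ n)"
  by (simp add: Ran_def image_comp)

lemma Ker_funpow_stable:
  fixes L :: "'a::real_vector \<Rightarrow> 'a"
  assumes "linear L" and stable: "Ker (L ^^ m) = Ker (L ^^ Suc m)" and "m \<le> n"
  shows "Ker (L ^^ n) = Ker (L ^^ m)"
proof -
  have "Ker (L ^^ (m + d)) = Ker (L ^^ m)" for d
  proof (induction d)
    case (Suc d)
    have "Ker (L ^^ (m + Suc d)) \<subseteq> Ker (L ^^ Suc m)"
    proof
      fix x assume "x \<in> Ker (L ^^ (m + Suc d))"
      then have "L x \<in> Ker (L ^^ (m + d))" by (simp add: Ker_def funpow_swap1)
      then have "L x \<in> Ker (L ^^ m)" using Suc.IH by simp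
      then show "x \<in> Ker (L ^^ Suc m)" by (simp add: Ker_def funpow_swap1)
    qed
    moreover have "Ker (L ^^ m) \<subseteq> Ker (L ^^ (m + Suc d))"
      using \<open>linear L\<close> by (rule Ker_funpow_mono) simp
    ultimately show ?case
      using stable by blast
  qed simp
  then show ?thesis
    using \<open>m \<le> n\<close> by (metis le_add_diff_inverse)
qed

lemma Ran_funpow_stable:
  assumes stable: "Ran (L ^^ Suc m) = Ran (L ^^ m)" and "m \<le> n"
  shows "Ran (L ^^ n) = Ran (L ^^ m)"
proof -
  have "Ran (L ^^ (m + d)) = Ran (L ^^ m)" for d
  proof (induction d)
    case (Suc d)
    have "Ran (L ^^ (m + Suc d)) = L ` Ran (L ^^ (m + d))"
      by (simp only: add_Suc_right Ran_funpow_Suc)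
    also have "\<dots> = Ran (L ^^ Suc m)"
      by (simp only: Suc.IH Ran_funpow_Suc)
    also have "\<dots> = Ran (L ^^ m)"
      by (rule stable)
    finally show ?case .
  qed simp
  then show ?thesis
    using \<open>m \<le> n\<close> by (metis le_add_diff_inverse)
qed

lemma Ker_funpow_stable_at_Ran_stable:
  fixes L :: "'a::real_vector \<Rightarrow> 'a"
  assumes "linear L"
    and Ker_stable: "Ker (L ^^ p) = Ker (L ^^ Suc p)"
    and Ran_stable: "Ran (L ^^ Suc q) = Ran (L ^^ q)"
  shows "Ker (L ^^ q) = Ker (L ^^ Suc q)"
proof
  show "Ker (L ^^ q) \<subseteq> Ker (L ^^ Suc q)"
    using \<open>linear L\<close> by (rule Ker_funpow_mono) simp
  show "Ker (L ^^ Suc q) \<subseteq> Ker (L ^^ q)"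
  proof
    fix x assume x: "x \<in> Ker (L ^^ Suc q)"
    have "(L ^^ q) x \<in> Ran (L ^^ (q + p))"
      using Ran_funpow_stable[OF Ran_stable, of "q + p"] by (simp add: Ran_def)
    then obtain y where y: "(L ^^ q) x = (L ^^ (q + p)) y"
      unfolding Ran_def by auto
    have "(L ^^ Suc (q + p)) y = (L ^^ Suc q) x"
      using y by simp
    then have "y \<in> Ker (L ^^ Suc (q + p))"
      using x by (simp add: Ker_def)
    then have "y \<in> Ker (L ^^ (q + p))"
      using Ker_funpow_stable[OF \<open>linear L\<close> Ker_stable, of "q + p"]
        Ker_funpow_stable[OF \<open>linear L\<close> Ker_stable, of "Suc (q + p)"] by simp
    then show "x \<in> Ker (L ^^ q)"
      using y by (simp add: Ker_def)
  qed
qed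

lemma Ran_funpow_stable_at_Ker_subset:
  fixes L :: "'a::real_vector \<Rightarrow> 'a"
  assumes "linear L"
    and Ker_subset: "Ker (L ^^ q) \<subseteq> Ker (L ^^ p)"
    and Ran_stable: "Ran (L ^^ Suc q) = Ran (L ^^ q)"
  shows "Ran (L ^^ Suc p) = Ran (L ^^ p)"
proof
  show "Ran (L ^^ Suc p) \<subseteq> Ran (L ^^ p)"
    by (rule Ran_funpow_antimono) simp
  show "Ran (L ^^ p) \<subseteq> Ran (L ^^ Suc p)"
  proof
    fix v assume "v \<in> Ran (L ^^ p)"
    then obtain x where v: "v = (L ^^ p) x"
      unfolding Ran_def by auto
    have "(L ^^ q) x \<in> Ran (L ^^ Suc q)"
      using Ran_stable by (simp add: Ran_def)
    then obtain z where z: "(L ^^ q) x = (L ^^ q) (L z)"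
      unfolding Ran_def by (auto simp: funpow_swap1)
    have lin: "linear (L ^^ n)" for n
      using \<open>linear L\<close> by (rule linear_funpow)
    have "x - L z \<in> Ker (L ^^ q)"
      using z by (simp add: Ker_def linear_diff[OF lin])
    then have "x - L z \<in> Ker (L ^^ p)"
      using Ker_subset by blast
    then have "(L ^^ p) x = (L ^^ p) (L z)"
      by (simp add: Ker_def linear_diff[OF lin])
    then show "v \<in> Ran (L ^^ Suc p)"
      using v by (simp add: Ran_def funpow_swap1)
  qed
qed

lemma ascent_eq_descent:
  fixes L :: "'a::real_vector \<Rightarrow> 'a"
  assumes "linear L"
    and finite_ascent: "\<exists>m. Ker (L ^^ m) = Ker (L ^^ Suc m)"
    and finite_descent: "\<exists>m. Ran (L ^^ Suc m) = Ran (L ^^ m)"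
  shows "ascent L = descent L"
proof -
  have Ker_stable: "Ker (L ^^ ascent L) = Ker (L ^^ Suc (ascent L))"
    unfolding ascent_def by (rule LeastI_ex[OF finite_ascent])
  have Ran_stable: "Ran (L ^^ Suc (descent L)) = Ran (L ^^ descent L)"
    unfolding descent_def by (rule LeastI_ex[OF finite_descent])
  have "Ker (L ^^ descent L) = Ker (L ^^ Suc (descent L))"
    using \<open>linear L\<close> Ker_stable Ran_stable by (rule Ker_funpow_stable_at_Ran_stable)
  then have le: "ascent L \<le> descent L"
    unfolding ascent_def by (rule Least_le)
  have "Ran (L ^^ Suc (ascent L)) = Ran (L ^^ ascent L)"
    using \<open>linear L\<close> _ Ran_stable
  proof (rule Ran_funpow_stable_at_Ker_subset)
    show "Ker (L ^^ descent L) \<subseteq> Ker (L ^^ ascent L)"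
      using Ker_funpow_stable[OF \<open>linear L\<close> Ker_stable le] by simp
  qed
  then have "descent L \<le> ascent L"
    unfolding descent_def by (rule Least_le)
  with le show ?thesis
    by simp
qed

lemma Ker_funpow_chain:
  fixes L :: "'a::real_vector \<Rightarrow> 'a"
  assumes "linear L" and finite_ascent: "\<exists>m. Ker (L ^^ m) = Ker (L ^^ Suc m)"
  shows "\<forall>m<ascent L. Ker (L ^^ m) \<subset> Ker (L ^^ Suc m)"
    and "\<forall>n\<ge>ascent L. Ker (L ^^ n) = Ker (L ^^ ascent L)"
proof -
  show "\<forall>m<ascent L. Ker (L ^^ m) \<subset> Ker (L ^^ Suc m)"
  proof (intro allI impI)
    fix m assume "m < ascent L"
    then have "Ker (L ^^ m) \<noteq> Ker (L ^^ Suc m)"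
      unfolding ascent_def by (rule not_less_Least)
    moreover have "Ker (L ^^ m) \<subseteq> Ker (L ^^ Suc m)"
      using \<open>linear L\<close> by (rule Ker_funpow_mono) simp
    ultimately show "Ker (L ^^ m) \<subset> Ker (L ^^ Suc m)"
      by (simp add: psubset_eq)
  qed
  have stable: "Ker (L ^^ ascent L) = Ker (L ^^ Suc (ascent L))"
    unfolding ascent_def by (rule LeastI_ex[OF finite_ascent])
  show "\<forall>n\<ge>ascent L. Ker (L ^^ n) = Ker (L ^^ ascent L)"
    using Ker_funpow_stable[OF \<open>linear L\<close> stable] by blast
qed

lemma Ran_funpow_chain:
  assumes finite_descent: "\<exists>m. Ran (L ^^ Suc m) = Ran (L ^^ m)"
  shows "\<forall>m<descent L. Ran (L ^^ Suc m) \<subset> Ran (L ^^ m)"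
    and "\<forall>n\<ge>descent L. Ran (L ^^ n) = Ran (L ^^ descent L)"
proof -
  show "\<forall>m<descent L. Ran (L ^^ Suc m) \<subset> Ran (L ^^ m)"
  proof (intro allI impI)
    fix m assume "m < descent L"
    then have "Ran (L ^^ Suc m) \<noteq> Ran (L ^^ m)"
      unfolding descent_def by (rule not_less_Least)
    moreover have "Ran (L ^^ Suc m) \<subseteq> Ran (L ^^ m)"
      by (rule Ran_funpow_antimono) simp
    ultimately show "Ran (L ^^ Suc m) \<subset> Ran (L ^^ m)"
      by (simp add: psubset_eq)
  qed
  have stable: "Ran (L ^^ Suc (descent L)) = Ran (L ^^ descent L)"
    unfolding descent_def by (rule LeastI_ex[OF finite_descent])
  show "\<forall>n\<ge>descent L. Ran (L ^^ n) = Ran (L ^^ descent L)"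
    using Ran_funpow_stable[OF stable] by blast
qed

lemma ascent_unique:
  assumes strict: "\<forall>m<r. Ker (L ^^ m) \<subset> Ker (L ^^ Suc m)"
    and stable: "\<forall>n\<ge>r. Ker (L ^^ n) = Ker (L ^^ r)"
  shows "r = ascent L"
proof -
  have "Ker (L ^^ Suc r) = Ker (L ^^ r)"
    by (rule stable[rule_format]) simp
  then have "ascent L \<le> r" and stable_ascent: "Ker (L ^^ ascent L) = Ker (L ^^ Suc (ascent L))"
    unfolding ascent_def by (rule Least_le[OF sym], rule LeastI[OF sym])
  moreover have "\<not> ascent L < r"
  proof
    assume "ascent L < r"
    with strict have "Ker (L ^^ ascent L) \<subset> Ker (L ^^ Suc (ascent L))"
      by blast
    with stable_ascent show False
      by simp
  qed
  ultimately show ?thesis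
    by simp
qed

lemma Ker_Ran_funpow_chains:
  fixes L :: "'a::real_vector \<Rightarrow> 'a"
  assumes "linear L"
    and finite_ascent: "\<exists>m. Ker (L ^^ m) = Ker (L ^^ Suc m)"
    and finite_descent: "\<exists>m. Ran (L ^^ Suc m) = Ran (L ^^ m)"
  shows "\<exists>!r::nat.
      (\<forall>m<r. Ker (L ^^ m) \<subset> Ker (L ^^ Suc m)) \<and>
      (\<forall>n\<ge>r. Ker (L ^^ n) = Ker (L ^^ r)) \<and>
      (\<forall>m<r. Ran (L ^^ Suc m) \<subset> Ran (L ^^ m)) \<and>
      (\<forall>n\<ge>r. Ran (L ^^ n) = Ran (L ^^ r))"
proof (rule ex1I[of _ "ascent L"], intro conjI)
  have eq: "descent L = ascent L"
    using ascent_eq_descent[OF assms] by simp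
  show "\<forall>m<ascent L. Ker (L ^^ m) \<subset> Ker (L ^^ Suc m)"
    and "\<forall>n\<ge>ascent L. Ker (L ^^ n) = Ker (L ^^ ascent L)"
    using Ker_funpow_chain[OF \<open>linear L\<close> finite_ascent] .
  show "\<forall>m<ascent L. Ran (L ^^ Suc m) \<subset> Ran (L ^^ m)"
    and "\<forall>n\<ge>ascent L. Ran (L ^^ n) = Ran (L ^^ ascent L)"
    using Ran_funpow_chain[OF finite_descent] unfolding eq .
next
  fix r
  assume r: "(\<forall>m<r. Ker (L ^^ m) \<subset> Ker (L ^^ Suc m)) \<and>
      (\<forall>n\<ge>r. Ker (L ^^ n) = Ker (L ^^ r)) \<and>
      (\<forall>m<r. Ran (L ^^ Suc m) \<subset> Ran (L ^^ m)) \<and>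
      (\<forall>n\<ge>r. Ran (L ^^ n) = Ran (L ^^ r))"
  show "r = ascent L"
    using r[THEN conjunct1] r[THEN conjunct2, THEN conjunct1] by (rule ascent_unique)
qed

section \<open>Riesz's lemma and compact maps\<close>

lemma infdist_lessE:
  assumes "A \<noteq> {}" and "infdist x A < e"
  obtains a where "a \<in> A" and "dist x a < e"
  using assms by (auto simp: infdist_notempty cInf_less_iff)

lemma Riesz_lemma_infdist:
  fixes x :: "'a::real_normed_vector"
  assumes "subspace K" and pos: "0 < infdist x K"
  obtains z where "z \<in> K" and "infdist x K \<le> norm (x - z)"
    and "\<forall>k\<in>K. 1/2 < norm (sgn (x - z) - k)"
proof -
  have "K \<noteq> {}"
    using \<open>subspace K\<close> subspace_0 by blast
  moreover have "infdist x K < 2 * infdist x K"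
    using pos by simp
  ultimately obtain z where z: "z \<in> K" and "dist x z < 2 * infdist x K"
    by (rule infdist_lessE)
  then have near: "norm (x - z) < 2 * infdist x K"
    by (simp add: dist_norm)
  have far: "infdist x K \<le> norm (x - z)"
    using infdist_le[OF z, of x] by (simp add: dist_norm)
  have "1/2 < norm (sgn (x - z) - k)" if "k \<in> K" for k
  proof -
    let ?r = "norm (x - z)"
    have r_pos: "0 < ?r"
      using far pos by linarith
    have "z + ?r *\<^sub>R k \<in> K"
      using \<open>subspace K\<close> z \<open>k \<in> K\<close> by (simp add: subspace_add subspace_scale)
    then have "infdist x K \<le> norm (x - (z + ?r *\<^sub>R k))"
      using infdist_le[of _ K x] by (simp add: dist_norm)
    also have "x - (z + ?r *\<^sub>R k) = ?r *\<^sub>R (sgn (x - z) - k)"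
      using r_pos by (simp add: sgn_div_norm algebra_simps)
    finally have "infdist x K \<le> ?r * norm (sgn (x - z) - k)"
      using r_pos by simp
    with near have "?r * 1 < ?r * (2 * norm (sgn (x - z) - k))"
      by linarith
    then show ?thesis
      using r_pos by simp
  qed
  with z far that show ?thesis
    by blast
qed

lemma Riesz_lemma:
  fixes M K :: "'a::real_normed_vector set"
  assumes "subspace K" "closed K" "subspace M" "K \<subset> M"
  obtains x where "x \<in> M" and "norm x = 1" and "\<forall>k\<in>K. 1/2 < norm (x - k)"
proof -
  obtain y where y: "y \<in> M" "y \<notin> K"
    using \<open>K \<subset> M\<close> by blast
  have "K \<noteq> {}"
    using \<open>subspace K\<close> subspace_0 by blast
  then have "0 < infdist y K"
    using infdist_pos_not_in_closed \<open>closed K\<close> y(2) by blast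
  then obtain z where z: "z \<in> K" "0 < norm (y - z)" "\<forall>k\<in>K. 1/2 < norm (sgn (y - z) - k)"
    using Riesz_lemma_infdist[OF \<open>subspace K\<close>] by (metis order.strict_trans2)
  have "sgn (y - z) \<in> M"
    using y(1) z(1) assms(3,4) by (auto simp: sgn_div_norm intro: subspace_scale subspace_diff)
  moreover have "norm (sgn (y - z)) = 1"
    using z(2) by (simp add: norm_sgn)
  ultimately show ?thesis
    using that z(3) by blast
qed

lemma Riesz_lemma_Ker:
  fixes L :: "'a::real_normed_vector \<Rightarrow> 'a"
  assumes "linear L" "subspace M" "x \<in> M" and pos: "0 < infdist x (M \<inter> Ker L)"
  obtains w where "w \<in> M" and "norm w \<le> 1" and "\<forall>k\<in>M \<inter> Ker L. 1/2 < norm (w - k)"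
    and "norm (L w) * infdist x (M \<inter> Ker L) \<le> norm (L x)"
proof -
  let ?K = "M \<inter> Ker L"
  have "subspace ?K"
    by (intro subspace_inter \<open>subspace M\<close> subspace_Ker \<open>linear L\<close>)
  then obtain z where z: "z \<in> ?K" "infdist x ?K \<le> norm (x - z)"
    and far: "\<forall>k\<in>?K. 1/2 < norm (sgn (x - z) - k)"
    using pos by (rule Riesz_lemma_infdist)
  have "sgn (x - z) \<in> M"
    using \<open>x \<in> M\<close> z(1) \<open>subspace M\<close> by (auto simp: sgn_div_norm intro: subspace_scale subspace_diff)
  moreover have "norm (sgn (x - z)) \<le> 1"
    by (simp add: norm_sgn)
  moreover have "norm (L (sgn (x - z))) * infdist x ?K \<le> norm (L x)"
  proof -
    have "L z = 0"
      using z(1) by (simp add: Ker_def)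
    have "x \<noteq> z"
      using z(2) pos by auto
    have "norm (L (sgn (x - z))) * infdist x ?K = norm (L x) / norm (x - z) * infdist x ?K"
      using \<open>L z = 0\<close> by (simp add: sgn_div_norm linear_scale[OF \<open>linear L\<close>]
          linear_diff[OF \<open>linear L\<close>] divide_inverse_commute)
    also have "\<dots> \<le> norm (L x) / norm (x - z) * norm (x - z)"
      using z(2) by (intro mult_left_mono) simp_all
    also have "\<dots> = norm (L x)"
      using \<open>x \<noteq> z\<close> by simp
    finally show ?thesis .
  qed
  ultimately show ?thesis
    using far that by blast
qed

definition compact_map :: "('a::real_normed_vector \<Rightarrow> 'b::real_normed_vector) \<Rightarrow> bool" where
  "compact_map C \<longleftrightarrow>
     (\<forall>(x::nat \<Rightarrow> 'a) B. (\<forall>n. norm (x n) \<le> B) \<longrightarrow> (\<exists>h. strict_mono h \<and> Cauchy (\<lambda>n. C (x (h n)))))"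

lemma compact_mapE:
  fixes x :: "nat \<Rightarrow> 'a::real_normed_vector"
  assumes "compact_map C" and "\<And>n. norm (x n) \<le> B"
  obtains h where "strict_mono h" and "Cauchy (\<lambda>n. C (x (h n)))"
  using assms unfolding compact_map_def by blast

lemma compact_map_not_separated:
  fixes x :: "nat \<Rightarrow> 'a::real_normed_vector"
  assumes "compact_map C" and "\<And>n. norm (x n) \<le> B" and "0 < e"
  shows "\<exists>m n. m < n \<and> norm (C (x m) - C (x n)) < e"
proof -
  obtain h where h: "strict_mono h" "Cauchy (\<lambda>n. C (x (h n)))"
    using assms(1,2) by (rule compact_mapE)
  then obtain N where "\<forall>m\<ge>N. \<forall>n\<ge>N. norm (C (x (h m)) - C (x (h n))) < e"
    using \<open>0 < e\<close> by (meson CauchyD)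
  moreover have "h N < h (Suc N)"
    using h(1) by (simp add: strict_monoD)
  ultimately show ?thesis
    using le_Suc_eq by blast
qed

lemma bounded_linear_if_compact_map:
  fixes C :: "'a::real_normed_vector \<Rightarrow> 'b::real_normed_vector"
  assumes "linear C" and "compact_map C"
  shows "bounded_linear C"
proof -
  have "\<exists>K. \<forall>x. norm (C x) \<le> norm x * K"
  proof (rule ccontr)
    assume "\<nexists>K. \<forall>x. norm (C x) \<le> norm x * K"
    then have "\<forall>n::nat. \<exists>x. norm x * real n < norm (C x)"
      by (meson not_le)
    then obtain x where x: "\<And>n. norm (x n) * real n < norm (C (x n))"
      by metis
    have "x n \<noteq> 0" for n
      using x[of n] linear_0[OF \<open>linear C\<close>] by auto
    then have unbounded: "real n < norm (C (sgn (x n)))" for n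
      using x[of n] by (simp add: sgn_div_norm linear_scale[OF \<open>linear C\<close>] field_simps)
    have "norm (sgn (x n)) \<le> 1" for n
      by (simp add: norm_sgn)
    with \<open>compact_map C\<close> obtain h where h: "strict_mono h" "Cauchy (\<lambda>n. C (sgn (x (h n))))"
      by (rule compact_mapE)
    then obtain K where K: "\<And>n. norm (C (sgn (x (h n)))) \<le> K"
      using Cauchy_Bseq BseqE by metis
    obtain n :: nat where "K < real n"
      using reals_Archimedean2 by blast
    moreover have "real n \<le> real (h n)"
      using seq_suble[OF h(1)] by simp
    ultimately show False
      using K[of n] unbounded[of "h n"] by linarith
  qed
  then show ?thesis
    using \<open>linear C\<close> by (auto simp: bounded_linear_def bounded_linear_axioms_def)
qed

lemma Cauchy_if_uniform_approx:
  fixes f :: "nat \<Rightarrow> 'a::metric_space"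
  assumes approx: "\<And>e. 0 < e \<Longrightarrow> \<exists>g. Cauchy g \<and> (\<forall>n. dist (f n) (g n) \<le> e)"
  shows "Cauchy f"
proof (rule metric_CauchyI)
  fix e :: real assume "0 < e"
  then obtain g where "Cauchy g" and g: "\<And>n. dist (f n) (g n) \<le> e / 4"
    using approx[of "e / 4"] by auto
  then obtain M where M: "\<forall>m\<ge>M. \<forall>n\<ge>M. dist (g m) (g n) < e / 2"
    using \<open>0 < e\<close> by (meson metric_CauchyD half_gt_zero)
  have "dist (f m) (f n) < e" if "M \<le> m" "M \<le> n" for m n
  proof -
    have "dist (f m) (f n) \<le> dist (f m) (g m) + dist (g m) (g n) + dist (g n) (f n)"
      by (metis add_mono_thms_linordered_semiring(3) dist_triangle order_trans)
    also have "\<dots> < e"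
      using g[of m] g[of n] M[rule_format, OF that] by (simp add: dist_commute)
    finally show ?thesis .
  qed
  then show "\<exists>M. \<forall>m\<ge>M. \<forall>n\<ge>M. dist (f m) (f n) < e"
    by blast
qed

section \<open>Compact perturbations of the identity\<close>

lemma bounded_linear_id_minus: "bounded_linear C \<Longrightarrow> bounded_linear (\<lambda>z. z - C z)"
  by (intro bounded_linear_sub bounded_linear_ident)

lemma id_minus_compact_subseq_tendsto:
  fixes C :: "'a::banach \<Rightarrow> 'a"
  assumes "bounded_linear C" "compact_map C" and L: "L = (\<lambda>z. z - C z)"
    and bounded: "\<And>n. norm (w n) \<le> B" and lim: "(\<lambda>n. L (w n)) \<longlonglongrightarrow> l"
  obtains h c where "strict_mono h" and "(\<lambda>n. w (h n)) \<longlonglongrightarrow> c" and "L c = l"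
proof -
  obtain h where h: "strict_mono h" "Cauchy (\<lambda>n. C (w (h n)))"
    using \<open>compact_map C\<close> bounded by (rule compact_mapE)
  then obtain c' where c': "(\<lambda>n. C (w (h n))) \<longlonglongrightarrow> c'"
    by (auto simp: Cauchy_convergent_iff convergent_def)
  have lim_h: "(\<lambda>n. L (w (h n))) \<longlonglongrightarrow> l"
    using LIMSEQ_subseq_LIMSEQ[OF lim h(1)] by (simp add: o_def)
  have "(\<lambda>n. L (w (h n)) + C (w (h n))) \<longlonglongrightarrow> l + c'"
    using lim_h c' by (rule tendsto_add)
  then have w_lim: "(\<lambda>n. w (h n)) \<longlonglongrightarrow> l + c'"
    by (simp add: L)
  have "bounded_linear L"
    unfolding L using \<open>bounded_linear C\<close> by (rule bounded_linear_id_minus)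
  then have "(\<lambda>n. L (w (h n))) \<longlonglongrightarrow> L (l + c')"
    using w_lim by (rule bounded_linear.tendsto)
  with lim_h have "L (l + c') = l"
    using LIMSEQ_unique by blast
  with h(1) w_lim that show ?thesis
    by blast
qed

lemma id_minus_compact_approaches_Ker:
  fixes C :: "'a::banach \<Rightarrow> 'a"
  assumes "bounded_linear C" "compact_map C" and L: "L = (\<lambda>z. z - C z)" and "closed M"
    and "\<And>n. w n \<in> M" "\<And>n. norm (w n) \<le> B" "(\<lambda>n. L (w n)) \<longlonglongrightarrow> 0" and "0 < e"
  shows "\<exists>n. \<exists>k\<in>M \<inter> Ker L. norm (w n - k) < e"
proof -
  obtain h c where h: "strict_mono h" and w_lim: "(\<lambda>n. w (h n)) \<longlonglongrightarrow> c" and "L c = 0"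
    using assms(1-3,6,7) by (rule id_minus_compact_subseq_tendsto)
  have "c \<in> M"
    using closed_sequentially[OF \<open>closed M\<close> _ w_lim] \<open>\<And>n. w n \<in> M\<close> by blast
  with \<open>L c = 0\<close> have "c \<in> M \<inter> Ker L"
    by (simp add: Ker_def)
  moreover obtain N where "norm (w (h N) - c) < e"
    using LIMSEQ_D[OF w_lim \<open>0 < e\<close>] by blast
  ultimately show ?thesis
    by blast
qed

lemma id_minus_compact_infdist_Ker_le:
  fixes C :: "'a::banach \<Rightarrow> 'a"
  assumes "bounded_linear C" "compact_map C" and L: "L = (\<lambda>z. z - C z)"
    and "closed M" "subspace M"
  obtains g where "\<forall>x\<in>M. infdist x (M \<inter> Ker L) \<le> g * norm (L x)"
proof (rule ccontr)
  let ?K = "M \<inter> Ker L"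
  have "linear L"
    using bounded_linear_id_minus[OF \<open>bounded_linear C\<close>] unfolding L by (rule bounded_linear.linear)
  assume "\<not> thesis"
  then have "\<forall>n::nat. \<exists>x\<in>M. real (Suc n) * norm (L x) < infdist x ?K"
    using that by (meson not_le)
  then obtain x where x: "\<And>n. x n \<in> M" "\<And>n. real (Suc n) * norm (L (x n)) < infdist (x n) ?K"
    by metis
  have dist_pos: "0 < infdist (x n) ?K" for n
    by (rule le_less_trans[OF _ x(2)]) simp
  have "\<exists>w\<in>M. norm w \<le> 1 \<and> (\<forall>k\<in>?K. 1/2 < norm (w - k)) \<and>
      norm (L w) * infdist (x n) ?K \<le> norm (L (x n))" for n
    using Riesz_lemma_Ker[OF \<open>linear L\<close> \<open>subspace M\<close> x(1) dist_pos[of n]] by blast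
  then obtain w where w: "\<And>n. w n \<in> M" "\<And>n. norm (w n) \<le> 1"
    and far: "\<And>n k. k \<in> ?K \<Longrightarrow> 1/2 < norm (w n - k)"
    and small: "\<And>n. norm (L (w n)) * infdist (x n) ?K \<le> norm (L (x n))"
    by metis
  have "(\<lambda>n. L (w n)) \<longlonglongrightarrow> 0"
  proof (rule Lim_null_comparison[OF always_eventually LIMSEQ_inverse_real_of_nat], intro allI)
    fix n
    have "real (Suc n) * (norm (L (w n)) * infdist (x n) ?K) \<le> real (Suc n) * norm (L (x n))"
      using small[of n] by (rule mult_left_mono) simp
    with x(2)[of n] have "real (Suc n) * norm (L (w n)) * infdist (x n) ?K < 1 * infdist (x n) ?K"
      by (simp only: mult.assoc mult_1_left)
    then have "real (Suc n) * norm (L (w n)) < 1"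
      by (rule mult_right_less_imp_less) (simp add: dist_pos less_imp_le)
    then show "norm (L (w n)) \<le> inverse (real (Suc n))"
      by (simp add: field_simps)
  qed
  with w have "\<exists>n. \<exists>k\<in>?K. norm (w n - k) < 1/2"
    by (intro id_minus_compact_approaches_Ker[OF assms(1-4)]) auto
  then obtain n k where "k \<in> ?K" "norm (w n - k) < 1/2"
    by blast
  with far[of k n] show False
    by linarith
qed

lemma id_minus_compact_bounded_preimage:
  fixes C :: "'a::banach \<Rightarrow> 'a"
  assumes "bounded_linear C" "compact_map C" and L: "L = (\<lambda>z. z - C z)"
    and "closed M" "subspace M"
  obtains g where "\<forall>x\<in>M. \<exists>x'\<in>M. L x' = L x \<and> norm x' \<le> g * norm (L x) + 1"
proof -
  let ?K = "M \<inter> Ker L"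
  obtain g where g: "\<forall>x\<in>M. infdist x ?K \<le> g * norm (L x)"
    using assms by (rule id_minus_compact_infdist_Ker_le)
  have "linear L"
    using bounded_linear_id_minus[OF \<open>bounded_linear C\<close>] unfolding L by (rule bounded_linear.linear)
  then have "subspace ?K"
    by (intro subspace_inter \<open>subspace M\<close> subspace_Ker)
  have "\<exists>x'\<in>M. L x' = L x \<and> norm x' \<le> \<bar>g\<bar> * norm (L x) + 1" if "x \<in> M" for x
  proof -
    have "?K \<noteq> {}"
      using \<open>subspace ?K\<close> subspace_0 by blast
    then obtain z where z: "z \<in> ?K" "dist x z < infdist x ?K + 1"
      using less_add_one by (rule infdist_lessE)
    have "x - z \<in> M"
      using \<open>x \<in> M\<close> z(1) \<open>subspace M\<close> by (auto intro: subspace_diff)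
    moreover have "L (x - z) = L x"
      using z(1) by (simp add: Ker_def linear_diff[OF \<open>linear L\<close>])
    moreover have "infdist x ?K \<le> \<bar>g\<bar> * norm (L x)"
      using g \<open>x \<in> M\<close> by (meson abs_ge_self mult_right_mono norm_ge_zero order_trans)
    then have "norm (x - z) \<le> \<bar>g\<bar> * norm (L x) + 1"
      using z(2) by (simp add: dist_norm)
    ultimately show ?thesis
      by blast
  qed
  then show ?thesis
    using that by blast
qed

lemma closed_image_id_minus_compact:
  fixes C :: "'a::banach \<Rightarrow> 'a"
  assumes "bounded_linear C" "compact_map C" and L: "L = (\<lambda>z. z - C z)"
    and "closed M" "subspace M"
  shows "closed (L ` M)"
  unfolding closed_sequential_limits
proof (intro allI impI, elim conjE)
  fix y l assume y: "\<forall>n. y n \<in> L ` M" and lim: "y \<longlonglongrightarrow> l"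
  obtain g where g: "\<forall>x\<in>M. \<exists>x'\<in>M. L x' = L x \<and> norm x' \<le> g * norm (L x) + 1"
    using assms by (rule id_minus_compact_bounded_preimage)
  have "\<exists>x\<in>M. L x = y n \<and> norm x \<le> g * norm (y n) + 1" for n
  proof -
    obtain x where "x \<in> M" "y n = L x"
      using y by blast
    then show ?thesis
      using g by auto
  qed
  then obtain x where x: "\<And>n. x n \<in> M" "\<And>n. L (x n) = y n"
    and x_le: "\<And>n. norm (x n) \<le> g * norm (y n) + 1"
    by metis
  obtain Y where Y: "\<And>n. norm (y n) \<le> Y"
    using lim by (metis BseqE LIMSEQ_imp_Cauchy Cauchy_Bseq)
  have "norm (x n) \<le> \<bar>g\<bar> * Y + 1" for n
  proof -
    have "g * norm (y n) \<le> \<bar>g\<bar> * Y"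
      by (intro mult_mono abs_ge_self Y abs_ge_zero norm_ge_zero)
    with x_le[of n] show ?thesis
      by linarith
  qed
  moreover have "(\<lambda>n. L (x n)) \<longlonglongrightarrow> l"
    using lim by (simp add: x(2))
  ultimately obtain h c where h: "strict_mono h" and c: "(\<lambda>n. x (h n)) \<longlonglongrightarrow> c" "L c = l"
    by (rule id_minus_compact_subseq_tendsto[OF assms(1-3)])
  have "c \<in> M"
    using closed_sequentially[OF \<open>closed M\<close> _ c(1)] x(1) by blast
  with c(2) show "l \<in> L ` M"
    by blast
qed

lemma id_minus_compact_no_increasing_chain:
  fixes C :: "'a::real_normed_vector \<Rightarrow> 'a"
  assumes "compact_map C" and L: "L = (\<lambda>z. z - C z)"
    and S: "\<And>m. subspace (S m)" "\<And>m. closed (S m)"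
    and strict: "\<And>m. S m \<subset> S (Suc m)" and invariant: "\<And>m. L ` S (Suc m) \<subseteq> S m"
  shows False
proof -
  have mono: "S m \<subseteq> S n" if "m \<le> n" for m n
    using lift_Suc_mono_le[of S, OF _ that] strict by blast
  have "\<exists>x\<in>S (Suc m). norm x = 1 \<and> (\<forall>k\<in>S m. 1/2 < norm (x - k))" for m
    using Riesz_lemma[OF S(1,2) S(1) strict] by blast
  then obtain x where x: "\<And>m. x m \<in> S (Suc m)" "\<And>m. norm (x m) = 1"
    and far: "\<And>m k. k \<in> S m \<Longrightarrow> 1/2 < norm (x m - k)"
    by metis
  have "1/2 < norm (C (x a) - C (x b))" if "a < b" for a b
  proof -
    have Lx: "L (x m) \<in> S m" for m
      using invariant x(1) by blast
    have "L (x b) \<in> S b" "x a \<in> S b" "L (x a) \<in> S b"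
      using Lx x(1) mono[of "Suc a" b] mono[of a b] \<open>a < b\<close> by auto
    then have "L (x b) + x a - L (x a) \<in> S b"
      using S(1) by (intro subspace_diff subspace_add) auto
    moreover have "C (x a) - C (x b) = (L (x b) + x a - L (x a)) - x b"
      unfolding L by simp
    ultimately show ?thesis
      using far[of _ b] by (metis norm_minus_commute)
  qed
  moreover have "\<exists>a b. a < b \<and> norm (C (x a) - C (x b)) < 1/2"
    using \<open>compact_map C\<close> x(2) by (intro compact_map_not_separated) auto
  ultimately show False
    by fastforce
qed

lemma id_minus_compact_no_decreasing_chain:
  fixes C :: "'a::real_normed_vector \<Rightarrow> 'a"
  assumes "compact_map C" and L: "L = (\<lambda>z. z - C z)"
    and S: "\<And>m. subspace (S m)" "\<And>m. closed (S m)"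
    and strict: "\<And>m. S (Suc m) \<subset> S m" and invariant: "\<And>m. L ` S m \<subseteq> S (Suc m)"
  shows False
proof -
  have antimono: "S n \<subseteq> S m" if "m \<le> n" for m n
    using lift_Suc_antimono_le[of S, OF _ that] strict by blast
  have "\<exists>x\<in>S m. norm x = 1 \<and> (\<forall>k\<in>S (Suc m). 1/2 < norm (x - k))" for m
    using Riesz_lemma[OF S(1,2) S(1) strict] by blast
  then obtain x where x: "\<And>m. x m \<in> S m" "\<And>m. norm (x m) = 1"
    and far: "\<And>m k. k \<in> S (Suc m) \<Longrightarrow> 1/2 < norm (x m - k)"
    by metis
  have "1/2 < norm (C (x a) - C (x b))" if "a < b" for a b
  proof -
    have Lx: "L (x m) \<in> S (Suc m)" for m
      using invariant x(1) by blast
    have "L (x a) \<in> S (Suc a)" "x b \<in> S (Suc a)" "L (x b) \<in> S (Suc a)"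
      using Lx x(1) antimono[of "Suc a" b] antimono[of "Suc a" "Suc b"] \<open>a < b\<close> by auto
    then have "L (x a) + x b - L (x b) \<in> S (Suc a)"
      using S(1) by (intro subspace_diff subspace_add) auto
    moreover have "C (x a) - C (x b) = x a - (L (x a) + x b - L (x b))"
      unfolding L by simp
    ultimately show ?thesis
      using far by metis
  qed
  moreover have "\<exists>a b. a < b \<and> norm (C (x a) - C (x b)) < 1/2"
    using \<open>compact_map C\<close> x(2) by (intro compact_map_not_separated) auto
  ultimately show False
    by fastforce
qed

lemma id_minus_compact_finite_ascent:
  fixes C :: "'a::real_normed_vector \<Rightarrow> 'a"
  assumes "bounded_linear C" "compact_map C" and L: "L = (\<lambda>z. z - C z)"
  shows "\<exists>m. Ker (L ^^ m) = Ker (L ^^ Suc m)"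
proof (rule ccontr)
  assume "\<nexists>m. Ker (L ^^ m) = Ker (L ^^ Suc m)"
  have "bounded_linear L"
    unfolding L using \<open>bounded_linear C\<close> by (rule bounded_linear_id_minus)
  then have "linear L"
    by (rule bounded_linear.linear)
  show False
  proof (rule id_minus_compact_no_increasing_chain[OF \<open>compact_map C\<close> L])
    show "subspace (Ker (L ^^ m))" for m
      using \<open>linear L\<close> by (intro subspace_Ker linear_funpow)
    show "closed (Ker (L ^^ m))" for m
      using \<open>bounded_linear L\<close> by (intro closed_Ker bounded_linear_funpow)
    show "Ker (L ^^ m) \<subset> Ker (L ^^ Suc m)" for m
      using Ker_funpow_mono[OF \<open>linear L\<close>, of m "Suc m"] \<open>\<nexists>m. Ker (L ^^ m) = Ker (L ^^ Suc m)\<close>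
      by auto
    show "L ` Ker (L ^^ Suc m) \<subseteq> Ker (L ^^ m)" for m
      by (auto simp: Ker_def funpow_swap1)
  qed
qed

lemma closed_Ran_funpow_id_minus_compact:
  fixes C :: "'a::banach \<Rightarrow> 'a"
  assumes "bounded_linear C" "compact_map C" and L: "L = (\<lambda>z. z - C z)"
  shows "closed (Ran (L ^^ m))"
proof (induction m)
  case 0
  show ?case
    by (simp add: Ran_def)
next
  case (Suc m)
  have "linear L"
    using bounded_linear_id_minus[OF \<open>bounded_linear C\<close>] unfolding L by (rule bounded_linear.linear)
  then have "subspace (Ran (L ^^ m))"
    by (intro subspace_Ran linear_funpow)
  with Suc.IH show ?case
    unfolding Ran_funpow_Suc using assms by (intro closed_image_id_minus_compact)
qed

lemma id_minus_compact_finite_descent: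
  fixes C :: "'a::banach \<Rightarrow> 'a"
  assumes "bounded_linear C" "compact_map C" and L: "L = (\<lambda>z. z - C z)"
  shows "\<exists>m. Ran (L ^^ Suc m) = Ran (L ^^ m)"
proof (rule ccontr)
  assume "\<nexists>m. Ran (L ^^ Suc m) = Ran (L ^^ m)"
  have "linear L"
    using bounded_linear_id_minus[OF \<open>bounded_linear C\<close>] unfolding L by (rule bounded_linear.linear)
  show False
  proof (rule id_minus_compact_no_decreasing_chain[OF \<open>compact_map C\<close> L])
    show "subspace (Ran (L ^^ m))" for m
      using \<open>linear L\<close> by (intro subspace_Ran linear_funpow)
    show "closed (Ran (L ^^ m))" for m
      using assms by (rule closed_Ran_funpow_id_minus_compact)
    show "Ran (L ^^ Suc m) \<subset> Ran (L ^^ m)" for m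
      using Ran_funpow_antimono[of m "Suc m" L] \<open>\<nexists>m. Ran (L ^^ Suc m) = Ran (L ^^ m)\<close>
      by auto
    show "L ` Ran (L ^^ m) \<subseteq> Ran (L ^^ Suc m)" for m
      unfolding Ran_funpow_Suc by (rule order_refl)
  qed
qed

section \<open>C*-algebras and Hilbert C*-modules\<close>

context
  fixes st :: "'a::{real_normed_algebra_1,banach} \<Rightarrow> 'a" and j :: 'a
  assumes cstar: "unital_cstar_algebra st j"
begin

lemma cstar_add: "st (a + b) = st a + st b"
  using cstar unfolding unital_cstar_algebra_def by blast

lemma cstar_mult: "st (a * b) = st b * st a"
  using cstar unfolding unital_cstar_algebra_def by blast

lemma cstar_involution: "st (st a) = a"
  using cstar unfolding unital_cstar_algebra_def by blast

lemma cstar_identity: "norm (st a * a) = (norm a)\<^sup>2"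
  using cstar unfolding unital_cstar_algebra_def by blast

lemma cstar_of_real: "st (of_real r) = of_real r"
proof -
  have "st (scC j (complex_of_real r) 1) = scC j (complex_of_real r) (st 1)"
    using cstar unfolding unital_cstar_algebra_def by simp
  moreover have "st 1 = 1"
    by (metis cstar_involution cstar_mult mult_1_left mult_1_right)
  ultimately show ?thesis
    by (simp add: scC_def of_real_def)
qed

lemma cstar_norm: "norm (st a) = norm a"
proof -
  have le: "norm b \<le> norm (st b)" for b
  proof -
    have "(norm b)\<^sup>2 \<le> norm (st b) * norm b"
      using cstar_identity[of b] norm_mult_ineq[of "st b" b] by simp
    then show ?thesis
      by (cases "b = 0") (auto simp: power2_eq_square)
  qed
  show ?thesis
    using le[of a] le[of "st a"] by (simp add: cstar_involution)
qed

end

context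
  fixes st :: "'a::{real_normed_algebra_1,banach} \<Rightarrow> 'a" and j :: 'a
    and act :: "'e::banach \<Rightarrow> 'a \<Rightarrow> 'e" and ip :: "'e \<Rightarrow> 'e \<Rightarrow> 'a"
  assumes hm: "hilbert_module st j act ip"
begin

lemma hm_cstar: "unital_cstar_algebra st j"
  using hm unfolding hilbert_module_def by blast

lemma act_add: "act x (a + b) = act x a + act x b"
  using hm unfolding hilbert_module_def by metis

lemma act_mult: "act x (a * b) = act (act x a) b"
  using hm unfolding hilbert_module_def by blast

lemma scaleR_eq_act: "r *\<^sub>R x = act x (of_real r)"
  using hm unfolding hilbert_module_def by blast

lemma ip_add: "ip x (y + z) = ip x y + ip x z"
  using hm unfolding hilbert_module_def by blast

lemma ip_act: "ip x (act y a) = ip x y * a"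
  using hm unfolding hilbert_module_def by blast

lemma ip_commute: "ip y x = st (ip x y)"
  using hm unfolding hilbert_module_def by blast

lemma ip_self_eq_0: "ip x x = 0 \<Longrightarrow> x = 0"
  using hm unfolding hilbert_module_def by blast

lemma norm_eq_sqrt_ip: "norm x = sqrt (norm (ip x x))"
  using hm unfolding hilbert_module_def by blast

lemma ip_add_left: "ip (x + y) v = ip x v + ip y v"
  by (metis ip_commute ip_add cstar_add[OF hm_cstar])

lemma ip_act_left: "ip (act x a) v = st a * ip x v"
  by (metis ip_commute ip_act cstar_mult[OF hm_cstar])

lemma ip_scaleR_left: "ip (r *\<^sub>R x) v = of_real r * ip x v"
  by (simp add: scaleR_eq_act ip_act_left cstar_of_real[OF hm_cstar])

lemma norm_act_le: "norm (act x a) \<le> norm x * norm a"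
proof -
  have "(norm (act x a))\<^sup>2 = norm (st a * ip x x * a)"
    by (simp add: norm_eq_sqrt_ip ip_act ip_act_left mult.assoc)
  also have "\<dots> \<le> norm (st a) * norm (ip x x) * norm a"
    by (metis mult_right_mono norm_ge_zero norm_mult_ineq order_trans)
  also have "\<dots> = (norm x * norm a)\<^sup>2"
    by (simp add: norm_eq_sqrt_ip cstar_norm[OF hm_cstar] power2_eq_square)
  finally show ?thesis
    by (rule power2_le_imp_le) simp
qed

lemma bounded_linear_act: "bounded_linear (act x)"
proof (rule bounded_linear_intro)
  show "act x (a + b) = act x a + act x b" for a b
    by (rule act_add)
  show "act x (r *\<^sub>R a) = r *\<^sub>R act x a" for r a
    by (metis act_mult scaleR_eq_act mult_scaleR_right mult.right_neutral of_real_def)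
  show "norm (act x a) \<le> norm a * norm x" for a
    using norm_act_le by (simp add: mult.commute)
qed

lemma linear_if_adjointable:
  assumes "adjointable ip C"
  shows "linear C"
proof -
  obtain S where S: "\<And>x y. ip (C x) y = ip x (S y)"
    using assms unfolding adjointable_def by blast
  have ip_left_cancel: "d = 0" if "\<And>w. ip d w = 0" for d
    using that ip_self_eq_0 by blast
  show ?thesis
  proof (rule linearI)
    fix x y
    have "ip (C (x + y) - C x - C y) w = 0" for w
      using ip_add_left[of "C (x + y) - C x - C y" "C x + C y" w] by (simp add: S ip_add_left)
    then have "C (x + y) - C x - C y = 0"
      by (rule ip_left_cancel)
    then show "C (x + y) = C x + C y"
      by (simp add: algebra_simps)
  next
    fix r and x :: 'e
    have "ip (C (r *\<^sub>R x) - r *\<^sub>R C x) w = 0" for w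
      using ip_add_left[of "C (r *\<^sub>R x) - r *\<^sub>R C x" "r *\<^sub>R C x" w] by (simp add: S ip_scaleR_left)
    then have "C (r *\<^sub>R x) - r *\<^sub>R C x = 0"
      by (rule ip_left_cancel)
    then show "C (r *\<^sub>R x) = r *\<^sub>R C x"
      by simp
  qed
qed

lemma compact_map_if_compact_op:
  assumes "property_H ip" and "compact_op j act ip C"
  shows "compact_map C"
  unfolding compact_map_def
proof (intro allI impI)
  fix \<zeta> :: "nat \<Rightarrow> 'e" and B :: real
  assume bounded: "\<forall>n. norm (\<zeta> n) \<le> B"
  then obtain h \<zeta>\<^sub>0 where h: "strict_mono h" and weak: "\<And>v. (\<lambda>k. ip v (\<zeta> (h k))) \<longlonglongrightarrow> ip v \<zeta>\<^sub>0"
    using \<open>property_H ip\<close> unfolding property_H_def by blast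
  have "Cauchy (\<lambda>k. C (\<zeta> (h k)))"
  proof (rule Cauchy_if_uniform_approx)
    fix e :: real assume "0 < e"
    then have "0 < e / (\<bar>B\<bar> + 1)"
      by simp
    with \<open>compact_op j act ip C\<close> obtain n :: nat and c xs ys
      where approx: "\<forall>z. norm (C z - (\<Sum>i<n. act (theta act ip (xs i) (ys i) z) (scC j (c i) 1)))
                        \<le> e / (\<bar>B\<bar> + 1) * norm z"
      unfolding compact_op_def by blast
    define F where "F z = (\<Sum>i<n. act (xs i) (ip (ys i) z * scC j (c i) 1))" for z
    have "(\<lambda>k. F (\<zeta> (h k))) \<longlonglongrightarrow> (\<Sum>i<n. act (xs i) (ip (ys i) \<zeta>\<^sub>0 * scC j (c i) 1))"
      unfolding F_def
      by (intro tendsto_sum bounded_linear.tendsto[OF bounded_linear_act] tendsto_mult_right weak)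
    moreover have "dist (C (\<zeta> (h k))) (F (\<zeta> (h k))) \<le> e" for k
    proof -
      have "dist (C (\<zeta> (h k))) (F (\<zeta> (h k))) \<le> e / (\<bar>B\<bar> + 1) * norm (\<zeta> (h k))"
        using approx by (simp add: dist_norm F_def theta_def act_mult)
      also have "\<dots> \<le> e / (\<bar>B\<bar> + 1) * (\<bar>B\<bar> + 1)"
        using bounded \<open>0 < e / (\<bar>B\<bar> + 1)\<close> by (intro mult_left_mono) (auto intro: order_trans)
      finally show ?thesis
        by simp
    qed
    ultimately show "\<exists>g. Cauchy g \<and> (\<forall>k. dist (C (\<zeta> (h k))) (g k) \<le> e)"
      using LIMSEQ_imp_Cauchy by blast
  qed
  with h show "\<exists>h. strict_mono h \<and> Cauchy (\<lambda>n. C (\<zeta> (h n)))"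
    by blast
qed

end

theorem theorem3p6:
  fixes st :: "'a::{real_normed_algebra_1,banach} \<Rightarrow> 'a" and j :: 'a
    and act :: "'e::banach \<Rightarrow> 'a \<Rightarrow> 'e" and ip :: "'e \<Rightarrow> 'e \<Rightarrow> 'a"
    and C L :: "'e \<Rightarrow> 'e"
  assumes "hilbert_module st j act ip"
    and "property_H ip"
    and "compact_op j act ip C"
    and "L = (\<lambda>z. z - C z)"
  shows "\<exists>!r::nat.
      (\<forall>m<r. Ker (L ^^ m) \<subset> Ker (L ^^ Suc m)) \<and>
      (\<forall>n\<ge>r. Ker (L ^^ n) = Ker (L ^^ r)) \<and>
      (\<forall>m<r. Ran (L ^^ Suc m) \<subset> Ran (L ^^ m)) \<and>
      (\<forall>n\<ge>r. Ran (L ^^ n) = Ran (L ^^ r))"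
proof -
  have "linear C"
    using assms(3) unfolding compact_op_def by (blast intro: linear_if_adjointable[OF assms(1)])
  moreover have "compact_map C"
    using assms(1-3) by (rule compact_map_if_compact_op)
  ultimately have "bounded_linear C"
    by (rule bounded_linear_if_compact_map)
  then have "linear L"
    unfolding assms(4) by (intro bounded_linear.linear bounded_linear_id_minus)
  show ?thesis
    using \<open>linear L\<close>
  proof (rule Ker_Ran_funpow_chains)
    show "\<exists>m. Ker (L ^^ m) = Ker (L ^^ Suc m)"
      using \<open>bounded_linear C\<close> \<open>compact_map C\<close> assms(4) by (rule id_minus_compact_finite_ascent)
    show "\<exists>m. Ran (L ^^ Suc m) = Ran (L ^^ m)"
      using \<open>bounded_linear C\<close> \<open>compact_map C\<close> assms(4) by (rule id_minus_compact_finite_descent)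
  qed
qed

end
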